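(* Let $W$ be a weakly symmetric discrete memoryless channel with input alphabet $\mathbb{F}_q$, let $\mu=\mathbb{E}(\|\pi\|^2)$, and suppose the all-zero word of length $n$ is sent through $n$ independent uses of $W$, with resulting reliability matrix $\Pi$. Then for every $\epsilon>0$, $$\mathrm{prob}\big(\langle\Pi,\lfloor\mathbf{0}\rfloor\rangle\le(1-\epsilon)\mu n\big)\le e^{-2n\mu^2\epsilon^2},\qquad \mathrm{prob}\big(\langle\Pi,\Pi\rangle\ge(1+\epsilon)n\mu\big)\le e^{-2n\mu^2\epsilon^2}.$$
   Context: A discrete memoryless channel with transition probabilities $W(y|x)$ is weakly symmetric if its output alphabet admits a partition $Y_1\cup\dots\cup Y_r$ such that each submatrix $(W(y|x))_{x\in\mathbb{F}_q,y\in Y_i}$ has all rows permutations of each other and all columns permutations of each other. The input is assumed uniform on $\mathbb{F}_q$; the APP vector of output $y$ is $\pi_y=(\mathrm{prob}(x=\alpha|y))_{\alpha\in\mathbb{F}_q}$ and $\|\pi\|^2=\sum_\alpha\pi(\alpha)^2$; $\mathbb{E}(\|\pi\|^2)$ is the expectation over the channel output. For received $\mathbf{y}=(y_1,\dots,y_n)$, the reliability matrix $\Pi$ is the $q\times n$ matrix with $j$-th column $\pi_{y_j}$. $\lfloor\mathbf{0}\rfloor$ is the $q\times n$ 0/1 matrix with ones exactly in row $0$; $\langle A,B\rangle=\sum_{i,j}a_{ij}b_{ij}$. *)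

theory Defs
  imports "HOL-Probability.Probability"
begin

definition chanW :: "('a \<Rightarrow> 'b pmf) \<Rightarrow> 'b \<Rightarrow> 'a \<Rightarrow> real" where
  "chanW W y x = pmf (W x) y"

definition weakly_symmetric :: "('a::finite \<Rightarrow> 'b::finite pmf) \<Rightarrow> bool" where
  "weakly_symmetric W \<longleftrightarrow>
     (\<exists>P. (\<forall>B\<in>P. B \<noteq> {}) \<and> \<Union>P = (UNIV :: 'b set) \<and>
          (\<forall>B1\<in>P. \<forall>B2\<in>P. B1 \<noteq> B2 \<longrightarrow> B1 \<inter> B2 = {}) \<and>
          (\<forall>B\<in>P.
             (\<forall>x x'. \<exists>\<sigma>. bij_betw \<sigma> B B \<and> (\<forall>y\<in>B. chanW W (\<sigma> y) x = chanW W y x')) \<and>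
             (\<forall>y\<in>B. \<forall>y'\<in>B. \<exists>\<tau>. bij \<tau> \<and> (\<forall>x. chanW W y (\<tau> x) = chanW W y' x))))"

definition joint :: "('a::finite \<Rightarrow> 'b pmf) \<Rightarrow> ('a \<times> 'b) pmf" where
  "joint W = do { x \<leftarrow> pmf_of_set UNIV; y \<leftarrow> W x; return_pmf (x, y) }"

definition app :: "('a::finite \<Rightarrow> 'b pmf) \<Rightarrow> 'b \<Rightarrow> 'a \<Rightarrow> real" where
  "app W y \<alpha> = measure_pmf.prob (joint W) {(\<alpha>, y)} / measure_pmf.prob (joint W) (UNIV \<times> {y})"

definition sqnorm :: "('a::finite \<Rightarrow> real) \<Rightarrow> real" where
  "sqnorm \<pi> = (\<Sum>\<alpha>\<in>UNIV. (\<pi> \<alpha>)^2)"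

definition mu :: "('a::finite \<Rightarrow> 'b pmf) \<Rightarrow> real" where
  "mu W = measure_pmf.expectation (joint W) (\<lambda>(x, y). sqnorm (app W y))"

text \<open>q x n matrices are functions 'a => nat => real (column index j < n).\<close>

definition rel_matrix :: "('a::finite \<Rightarrow> 'b pmf) \<Rightarrow> (nat \<Rightarrow> 'b) \<Rightarrow> 'a \<Rightarrow> nat \<Rightarrow> real" where
  "rel_matrix W ys = (\<lambda>\<alpha> j. app W (ys j) \<alpha>)"

definition zero_floor :: "'a::zero \<Rightarrow> nat \<Rightarrow> real" where
  "zero_floor = (\<lambda>\<alpha> j. if \<alpha> = 0 then 1 else 0)"

definition frob :: "nat \<Rightarrow> ('a::finite \<Rightarrow> nat \<Rightarrow> real) \<Rightarrow> ('a \<Rightarrow> nat \<Rightarrow> real) \<Rightarrow> real" where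
  "frob n A B = (\<Sum>\<alpha>\<in>UNIV. \<Sum>j<n. A \<alpha> j * B \<alpha> j)"

definition out_dist :: "('a::zero \<Rightarrow> 'b pmf) \<Rightarrow> nat \<Rightarrow> (nat \<Rightarrow> 'b) pmf" where
  "out_dist W n = Pi_pmf {..<n} undefined (\<lambda>_. W 0)"

end

theory Submission
  imports Defs
begin

text \<open>With the zero word sent, the outputs \<open>y\<^sub>1, \<dots>, y\<^sub>n\<close> are i.i.d. with law \<open>W 0\<close>, so
  \<open>\<langle>\<Pi>,\<lfloor>0\<rfloor>\<rangle> = \<Sum>\<^sub>j \<pi>(y\<^sub>j)(0)\<close> and \<open>\<langle>\<Pi>,\<Pi>\<rangle> = \<Sum>\<^sub>j \<parallel>\<pi>(y\<^sub>j)\<parallel>\<^sup>2\<close> are sums of \<open>n\<close> i.i.d.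
  variables with values in \<open>[0,1]\<close>, and Hoeffding's inequality with deviation \<open>\<epsilon>\<mu>n\<close> gives
  both bounds once the two means are known to equal \<open>\<mu>\<close>. This is where weak symmetry enters:
  inside each block of outputs the rows of \<open>W\<close> are permutations of each other, and \<open>\<pi>(y)\<close>
  changes only by a permutation of the inputs within a block, so \<open>\<Sum>\<^sub>y W(y|x) \<parallel>\<pi>(y)\<parallel>\<^sup>2\<close>
  and \<open>\<Sum>\<^sub>y W(y|x) \<pi>(y)(x)\<close> do not depend on the input \<open>x\<close>. The first is therefore \<open>\<mu>\<close>;
  averaging the second over \<open>x\<close> turns it into the first.\<close>

definition column_sum :: "('a::finite \<Rightarrow> 'b pmf) \<Rightarrow> 'b \<Rightarrow> real" where
  "column_sum W y = (\<Sum>x\<in>UNIV. chanW W y x)"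

definition columns_perm :: "('a::finite \<Rightarrow> 'b pmf) \<Rightarrow> 'b \<Rightarrow> 'b \<Rightarrow> bool" where
  "columns_perm W y y' \<longleftrightarrow> (\<exists>\<tau>. bij \<tau> \<and> (\<forall>x. chanW W y (\<tau> x) = chanW W y' x))"

lemma chanW_nonneg: "chanW W y x \<ge> 0"
  by (simp add: chanW_def)

lemma pmf_joint:
  fixes W :: "'a::finite \<Rightarrow> 'b pmf"
  shows "pmf (joint W) (x, y) = chanW W y x / real CARD('a)"
proof -
  have "joint W = pmf_of_set UNIV \<bind> (\<lambda>x'. map_pmf (Pair x') (W x'))"
    unfolding joint_def map_pmf_def by simp
  then have "pmf (joint W) (x, y) = (\<Sum>x'\<in>UNIV. pmf (map_pmf (Pair x') (W x')) (x, y)) / real CARD('a)"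
    by (simp add: pmf_bind integral_pmf_of_set)
  also have "(\<Sum>x'\<in>UNIV. pmf (map_pmf (Pair x') (W x')) (x, y)) = (\<Sum>x'\<in>UNIV. if x' = x then chanW W y x else 0)"
    by (intro sum.cong refl)
       (auto simp: chanW_def pmf_map_inj' inj_on_def pmf_eq_0_set_pmf)
  finally show ?thesis by simp
qed

lemma app_eq_chanW_div_column_sum:
  fixes W :: "'a::finite \<Rightarrow> 'b::finite pmf"
  shows "app W y x = chanW W y x / column_sum W y"
proof -
  have "UNIV \<times> {y} = (\<lambda>x. (x, y)) ` (UNIV :: 'a set)" by auto
  then have "measure_pmf.prob (joint W) (UNIV \<times> {y}) = (\<Sum>x\<in>UNIV. pmf (joint W) (x, y))"
    by (simp add: measure_measure_pmf_finite sum.reindex inj_on_def)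
  also have "\<dots> = column_sum W y / real CARD('a)"
    by (simp add: pmf_joint column_sum_def sum_divide_distrib)
  finally show ?thesis
    unfolding app_def measure_pmf_single pmf_joint by simp
qed

lemma app_nonneg_le_1:
  fixes W :: "'a::finite \<Rightarrow> 'b::finite pmf"
  shows "app W y x \<in> {0..1}"
proof -
  have "chanW W y x \<le> column_sum W y"
    unfolding column_sum_def by (rule member_le_sum) (auto simp: chanW_nonneg)
  then show ?thesis using chanW_nonneg[of W y x]
    by (cases "column_sum W y = 0") (auto simp: app_eq_chanW_div_column_sum divide_le_eq_1)
qed

lemma sqnorm_app_nonneg_le_1:
  fixes W :: "'a::finite \<Rightarrow> 'b::finite pmf"
  shows "sqnorm (app W y) \<in> {0..1}"
proof -
  have "sqnorm (app W y) \<le> (\<Sum>x\<in>UNIV. app W y x)"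
    unfolding sqnorm_def using app_nonneg_le_1[of W y]
    by (intro sum_mono) (auto simp: power2_eq_square intro: mult_left_le)
  also have "(\<Sum>x\<in>UNIV. app W y x) = column_sum W y / column_sum W y"
    by (simp add: app_eq_chanW_div_column_sum column_sum_def sum_divide_distrib[symmetric])
  also have "\<dots> \<le> 1" by simp
  finally show ?thesis by (auto simp: sqnorm_def intro: sum_nonneg)
qed

lemma column_sum_eq_if_columns_perm:
  fixes W :: "'a::finite \<Rightarrow> 'b::finite pmf"
  assumes "columns_perm W y y'"
  shows "column_sum W y = column_sum W y'"
proof -
  obtain \<tau> where \<tau>: "bij \<tau>" "\<And>x. chanW W y (\<tau> x) = chanW W y' x"
    using assms unfolding columns_perm_def by blast
  have "column_sum W y' = (\<Sum>x\<in>UNIV. chanW W y (\<tau> x))" by (simp add: column_sum_def \<tau>(2))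
  also have "\<dots> = column_sum W y" unfolding column_sum_def by (rule sum.reindex_bij_betw[OF \<tau>(1)])
  finally show ?thesis by simp
qed

lemma sqnorm_app_eq_if_columns_perm:
  fixes W :: "'a::finite \<Rightarrow> 'b::finite pmf"
  assumes "columns_perm W y y'"
  shows "sqnorm (app W y) = sqnorm (app W y')"
proof -
  obtain \<tau> where \<tau>: "bij \<tau>" "\<And>x. chanW W y (\<tau> x) = chanW W y' x"
    using assms unfolding columns_perm_def by blast
  have "sqnorm (app W y') = (\<Sum>x\<in>UNIV. (chanW W y (\<tau> x) / column_sum W y)^2)"
    by (simp add: sqnorm_def app_eq_chanW_div_column_sum \<tau>(2)
        column_sum_eq_if_columns_perm[OF assms])
  also have "\<dots> = sqnorm (app W y)"
    unfolding sqnorm_def app_eq_chanW_div_column_sum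
    by (rule sum.reindex_bij_betw[OF \<tau>(1), where g = "\<lambda>x. (chanW W y x / column_sum W y)^2"])
  finally show ?thesis by simp
qed

lemma weakly_symmetric_row_sum_invariant:
  fixes W :: "'a::finite \<Rightarrow> 'b::finite pmf" and f :: "real \<Rightarrow> 'b \<Rightarrow> real"
  assumes "weakly_symmetric W"
    and f_invariant: "\<And>v y y'. columns_perm W y y' \<Longrightarrow> f v y = f v y'"
  shows "(\<Sum>y\<in>UNIV. f (chanW W y x) y) = (\<Sum>y\<in>UNIV. f (chanW W y x') y)"
proof -
  obtain P where cover: "\<Union>P = (UNIV :: 'b set)"
    and disjoint: "\<forall>B1\<in>P. \<forall>B2\<in>P. B1 \<noteq> B2 \<longrightarrow> B1 \<inter> B2 = {}"
    and rows: "\<And>B x x'. B \<in> P \<Longrightarrow> \<exists>\<sigma>. bij_betw \<sigma> B B \<and> (\<forall>y\<in>B. chanW W (\<sigma> y) x = chanW W y x')"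
    and columns: "\<And>B y y'. B \<in> P \<Longrightarrow> y \<in> B \<Longrightarrow> y' \<in> B \<Longrightarrow> columns_perm W y y'"
    using assms(1) unfolding weakly_symmetric_def columns_perm_def by metis
  have block: "(\<Sum>y\<in>B. f (chanW W y x) y) = (\<Sum>y\<in>B. f (chanW W y x') y)" if "B \<in> P" for B
  proof -
    obtain \<sigma> where \<sigma>: "bij_betw \<sigma> B B" "\<And>y. y \<in> B \<Longrightarrow> chanW W (\<sigma> y) x = chanW W y x'"
      using rows[OF \<open>B \<in> P\<close>] by blast
    have "(\<Sum>y\<in>B. f (chanW W y x') y) = (\<Sum>y\<in>B. f (chanW W (\<sigma> y) x) (\<sigma> y))"
    proof (rule sum.cong[OF refl])
      fix y assume "y \<in> B"
      then have "columns_perm W y (\<sigma> y)"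
        using columns[OF \<open>B \<in> P\<close>] bij_betwE[OF \<sigma>(1)] by blast
      then show "f (chanW W y x') y = f (chanW W (\<sigma> y) x) (\<sigma> y)"
        using f_invariant \<sigma>(2)[OF \<open>y \<in> B\<close>] by metis
    qed
    also have "\<dots> = (\<Sum>y\<in>B. f (chanW W y x) y)"
      by (rule sum.reindex_bij_betw[OF \<sigma>(1), where g = "\<lambda>y. f (chanW W y x) y"])
    finally show ?thesis by simp
  qed
  have split_blocks: "sum g (UNIV :: 'b set) = (\<Sum>B\<in>P. sum g B)" for g
    unfolding cover[symmetric] using sum.Union_disjoint[of P g] disjoint
    by (simp add: o_def finite_subset[of P UNIV])
  show ?thesis unfolding split_blocks using block by (rule sum.cong[OF refl])
qed

lemma mu_eq_sum:
  fixes W :: "'a::finite \<Rightarrow> 'b::finite pmf"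
  shows "mu W = (\<Sum>x\<in>UNIV. \<Sum>y\<in>UNIV. chanW W y x * sqnorm (app W y)) / real CARD('a)"
proof -
  have "mu W = (\<Sum>z\<in>UNIV. (case z of (x, y) \<Rightarrow> sqnorm (app W y)) * pmf (joint W) z)"
    unfolding mu_def by (rule integral_measure_pmf_real) auto
  also have "\<dots> = (\<Sum>x\<in>UNIV. \<Sum>y\<in>UNIV. sqnorm (app W y) * pmf (joint W) (x, y))"
    by (simp only: sum.cartesian_product) (auto intro!: sum.cong)
  finally show ?thesis
    by (simp add: pmf_joint sum_divide_distrib mult.commute)
qed

lemma expectation_pmf_finite:
  fixes p :: "'b::finite pmf"
  shows "measure_pmf.expectation p g = (\<Sum>y\<in>UNIV. g y * pmf p y)"
  by (rule integral_measure_pmf_real) auto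

lemma weakly_symmetric_expectation_app_eq_mu:
  fixes W :: "'a::finite \<Rightarrow> 'b::finite pmf"
  assumes "weakly_symmetric W"
  shows "measure_pmf.expectation (W x) (\<lambda>y. sqnorm (app W y)) = mu W"
    and "measure_pmf.expectation (W x) (\<lambda>y. app W y x) = mu W"
proof -
  define F where "F x = (\<Sum>y\<in>UNIV. chanW W y x * (chanW W y x / column_sum W y))" for x
  define G where "G x = (\<Sum>y\<in>UNIV. chanW W y x * sqnorm (app W y))" for x
  have F_sum: "(\<Sum>x'\<in>UNIV. F x') = real CARD('a) * F x"
    unfolding F_def
    by (subst weakly_symmetric_row_sum_invariant[OF assms, where f = "\<lambda>v y. v * (v / column_sum W y)" and x' = x])
       (simp_all add: column_sum_eq_if_columns_perm)
  have G_sum: "(\<Sum>x'\<in>UNIV. G x') = real CARD('a) * G x"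
    unfolding G_def
    by (subst weakly_symmetric_row_sum_invariant[OF assms, where f = "\<lambda>v y. v * sqnorm (app W y)" and x' = x])
       (simp_all add: sqnorm_app_eq_if_columns_perm)
  have mu_G: "mu W = G x"
    unfolding mu_eq_sum G_def[symmetric] G_sum by simp
  have column_weight: "column_sum W y * sqnorm (app W y)
      = (\<Sum>x\<in>UNIV. chanW W y x * (chanW W y x / column_sum W y))" for y
    unfolding sqnorm_def app_eq_chanW_div_column_sum sum_distrib_left
    by (rule sum.cong) (auto simp: power2_eq_square)
  have "(\<Sum>x'\<in>UNIV. G x') = (\<Sum>y\<in>UNIV. column_sum W y * sqnorm (app W y))"
    unfolding G_def column_sum_def by (subst sum.swap) (simp add: sum_distrib_right)
  also have "\<dots> = (\<Sum>x'\<in>UNIV. F x')"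
    unfolding column_weight F_def by (rule sum.swap)
  finally have "G x = F x" by (simp add: F_sum G_sum)
  then have mu_F: "mu W = F x" using mu_G by simp
  show "measure_pmf.expectation (W x) (\<lambda>y. sqnorm (app W y)) = mu W"
    unfolding mu_G G_def expectation_pmf_finite by (simp add: chanW_def mult.commute)
  show "measure_pmf.expectation (W x) (\<lambda>y. app W y x) = mu W"
    unfolding mu_F F_def expectation_pmf_finite
    by (simp add: app_eq_chanW_div_column_sum chanW_def mult.commute)
qed

lemma frob_rel_matrix_zero_floor:
  "frob n (rel_matrix W ys) zero_floor = (\<Sum>j<n. app W (ys j) (0::'a::{finite,zero}))"
  unfolding frob_def rel_matrix_def zero_floor_def
  by (subst sum.swap) (simp add: if_distrib cong: if_cong)

lemma frob_rel_matrix_self: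
  "frob n (rel_matrix W ys) (rel_matrix W ys) = (\<Sum>j<n. sqnorm (app W (ys j)))"
  unfolding frob_def rel_matrix_def sqnorm_def
  by (subst sum.swap) (simp add: power2_eq_square)

lemma Pi_pmf_Hoeffding_ineq:
  fixes p :: "'b pmf" and g :: "'b \<Rightarrow> real" and I :: "'i set" and d :: 'b
  assumes g_range: "\<And>y. g y \<in> {0..1}" and "finite I" "I \<noteq> {}" and "t \<ge> 0"
  defines "M \<equiv> measure_pmf (Pi_pmf I d (\<lambda>_. p))"
  shows "measure M {ys. (\<Sum>i\<in>I. g (ys i)) \<le> card I * measure_pmf.expectation p g - t}
           \<le> exp (-2 * t^2 / card I)"
    and "measure M {ys. (\<Sum>i\<in>I. g (ys i)) \<ge> card I * measure_pmf.expectation p g + t}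
           \<le> exp (-2 * t^2 / card I)"
proof -
  obtain i0 where "i0 \<in> I" using \<open>I \<noteq> {}\<close> by blast
  have marginal: "map_pmf (\<lambda>ys. ys i) (Pi_pmf I d (\<lambda>_. p)) = p" if "i \<in> I" for i
    using that \<open>finite I\<close> by (subst Pi_pmf_component) auto
  have component: "distr M borel (\<lambda>ys. g (ys i)) = distr (measure_pmf p) borel g" if "i \<in> I" for i
  proof -
    have "distr M borel (\<lambda>ys. g (ys i))
        = distr (measure_pmf (map_pmf (\<lambda>ys. ys i) (Pi_pmf I d (\<lambda>_. p)))) borel g"
      unfolding M_def map_pmf_rep_eq by (subst distr_distr) (auto simp: o_def)
    then show ?thesis using marginal[OF that] by simp
  qed
  have "integral\<^sup>L M (\<lambda>ys. g (ys i0))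
      = measure_pmf.expectation (map_pmf (\<lambda>ys. ys i0) (Pi_pmf I d (\<lambda>_. p))) g"
    unfolding M_def by simp
  then have mean: "measure_pmf.expectation p g = integral\<^sup>L M (\<lambda>ys. g (ys i0))"
    using marginal[OF \<open>i0 \<in> I\<close>] by simp
  interpret Hoeffding_ineq_iid M I "\<lambda>i ys. g (ys i)" "\<lambda>ys. g (ys i0)" 0 1 "integral\<^sup>L M (\<lambda>ys. g (ys i0))"
  proof unfold_locales
    show "prob_space.indep_vars M (\<lambda>_. borel) (\<lambda>i ys. g (ys i)) I"
      unfolding M_def using \<open>finite I\<close>
      by (intro prob_space.indep_vars_compose2[OF _ indep_vars_Pi_pmf])
         (auto simp: measure_pmf.prob_space_axioms)
  qed (use g_range component \<open>i0 \<in> I\<close> \<open>finite I\<close> in \<open>auto simp: M_def\<close>)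
  show "measure M {ys. (\<Sum>i\<in>I. g (ys i)) \<le> card I * measure_pmf.expectation p g - t}
           \<le> exp (-2 * t^2 / card I)"
    using Hoeffding_ineq_le[OF \<open>t \<ge> 0\<close> _ \<open>I \<noteq> {}\<close>] mean by (simp add: M_def)
  show "measure M {ys. (\<Sum>i\<in>I. g (ys i)) \<ge> card I * measure_pmf.expectation p g + t}
           \<le> exp (-2 * t^2 / card I)"
    using Hoeffding_ineq_ge[OF \<open>t \<ge> 0\<close> _ \<open>I \<noteq> {}\<close>] mean by (simp add: M_def)
qed

theorem lemma2:
  fixes W :: "'a::{field,finite} \<Rightarrow> 'b::finite pmf" and n :: nat and \<epsilon> :: real
  assumes "weakly_symmetric W" and "\<epsilon> > 0"
  shows "measure_pmf.prob (out_dist W n)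
           {ys. frob n (rel_matrix W ys) zero_floor \<le> (1 - \<epsilon>) * mu W * real n}
           \<le> exp (- 2 * real n * (mu W)^2 * \<epsilon>^2)
       \<and> measure_pmf.prob (out_dist W n)
           {ys. frob n (rel_matrix W ys) (rel_matrix W ys) \<ge> (1 + \<epsilon>) * real n * mu W}
           \<le> exp (- 2 * real n * (mu W)^2 * \<epsilon>^2)"
proof (cases "n = 0")
  case True
  then show ?thesis by (simp add: measure_pmf.prob_le_1)
next
  case False
  define t where "t = \<epsilon> * mu W * real n"
  have "mu W \<ge> 0"
    using weakly_symmetric_expectation_app_eq_mu(1)[OF assms(1), of 0] sqnorm_app_nonneg_le_1
    by (metis Bochner_Integration.integral_nonneg atLeastAtMost_iff)
  then have "t \<ge> 0" using assms(2) by (simp add: t_def)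
  have exponent: "- 2 * t^2 / real n = - 2 * real n * (mu W)^2 * \<epsilon>^2"
    using False by (simp add: t_def power2_eq_square field_simps)
  note means = weakly_symmetric_expectation_app_eq_mu[OF assms(1), of 0]
  have "measure_pmf.prob (out_dist W n) {ys. (\<Sum>j<n. app W (ys j) 0) \<le> real n * mu W - t}
      \<le> exp (- 2 * real n * (mu W)^2 * \<epsilon>^2)"
    using Pi_pmf_Hoeffding_ineq(1)[of "\<lambda>y. app W y 0" "{..<n}" t undefined "W 0",
        OF app_nonneg_le_1 _ _ \<open>t \<ge> 0\<close>] False
    unfolding out_dist_def means exponent[symmetric] by (simp add: lessThan_empty_iff)
  moreover have "measure_pmf.prob (out_dist W n) {ys. (\<Sum>j<n. sqnorm (app W (ys j))) \<ge> real n * mu W + t}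
      \<le> exp (- 2 * real n * (mu W)^2 * \<epsilon>^2)"
    using Pi_pmf_Hoeffding_ineq(2)[of "\<lambda>y. sqnorm (app W y)" "{..<n}" t undefined "W 0",
        OF sqnorm_app_nonneg_le_1 _ _ \<open>t \<ge> 0\<close>] False
    unfolding out_dist_def means exponent[symmetric] by (simp add: lessThan_empty_iff)
  ultimately show ?thesis
    unfolding frob_rel_matrix_zero_floor frob_rel_matrix_self t_def
    by (simp add: algebra_simps)
qed

end
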